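(* Let $R$ be a ring, $S_0(R)$ the largest element of $\mathrm{Den}(R,0)$ and $Q(R)=S_0(R)^{-1}R=RS_0(R)^{-1}$ with group of units $Q(R)^*$. Then: (1) $S_0(Q(R))=Q(R)^*$ and $S_0(Q(R))\cap R=S_0(R)$; (2) $Q(R)^*$ is generated by $S_0(R)$ and $\{s^{-1}\mid s\in S_0(R)\}$; (3) $Q(R)^*=\{s^{-1}t\mid s,t\in S_0(R)\}=\{ts^{-1}\mid s,t\in S_0(R)\}$; (4) $Q(Q(R))=Q(R)$.
   Context: Rings are associative with $1$. A multiplicatively closed subset $S$ ($1\in S$, $0\notin S$) is a left (resp. right) Ore set if $Sr\cap Rs\ne\emptyset$ (resp. $rS\cap sR\ne\emptyset$) for all $r,s$ with $s\in S$; it is a left denominator set if it is left Ore and $rs=0$ ($s\in S$) implies $tr=0$ for some $t\in S$; right denominator sets are defined symmetrically. $\mathrm{Den}(R,0)$ is the set of subsets which are both left and right denominator sets and consist of regular elements; it has a largest element $S_0(R)$, and $Q(R):=S_0(R)^{-1}R\cong RS_0(R)^{-1}$ is the largest quotient ring of $R$, containing $R$. The same constructions apply to any ring, e.g. $Q(R)$. *)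

theory Defs
  imports Main
begin

text \<open>Rings are modelled as subrings A of an ambient type 'a :: ring_1.
  The ambient type itself (UNIV) plays the role of Q(R).\<close>

definition subring :: "'a::ring_1 set \<Rightarrow> bool" where
  "subring A \<longleftrightarrow> 0 \<in> A \<and> 1 \<in> A \<and> (\<forall>x\<in>A. \<forall>y\<in>A. x + y \<in> A \<and> x * y \<in> A) \<and> (\<forall>x\<in>A. - x \<in> A)"

definition mult_closed :: "'a::ring_1 set \<Rightarrow> 'a set \<Rightarrow> bool" where
  "mult_closed A S \<longleftrightarrow> S \<subseteq> A \<and> 1 \<in> S \<and> 0 \<notin> S \<and> (\<forall>s\<in>S. \<forall>t\<in>S. s * t \<in> S)"

definition left_ore :: "'a::ring_1 set \<Rightarrow> 'a set \<Rightarrow> bool" where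
  "left_ore A S \<longleftrightarrow> mult_closed A S \<and>
     (\<forall>r\<in>A. \<forall>s\<in>S. \<exists>s'\<in>S. \<exists>r'\<in>A. s' * r = r' * s)"

definition right_ore :: "'a::ring_1 set \<Rightarrow> 'a set \<Rightarrow> bool" where
  "right_ore A S \<longleftrightarrow> mult_closed A S \<and>
     (\<forall>r\<in>A. \<forall>s\<in>S. \<exists>s'\<in>S. \<exists>r'\<in>A. r * s' = s * r')"

definition left_denom :: "'a::ring_1 set \<Rightarrow> 'a set \<Rightarrow> bool" where
  "left_denom A S \<longleftrightarrow> left_ore A S \<and>
     (\<forall>r\<in>A. \<forall>s\<in>S. r * s = 0 \<longrightarrow> (\<exists>t\<in>S. t * r = 0))"

definition right_denom :: "'a::ring_1 set \<Rightarrow> 'a set \<Rightarrow> bool" where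
  "right_denom A S \<longleftrightarrow> right_ore A S \<and>
     (\<forall>r\<in>A. \<forall>s\<in>S. s * r = 0 \<longrightarrow> (\<exists>t\<in>S. r * t = 0))"

definition regular_in :: "'a::ring_1 set \<Rightarrow> 'a set" where
  "regular_in A = {x\<in>A. \<forall>r\<in>A. (x * r = 0 \<longrightarrow> r = 0) \<and> (r * x = 0 \<longrightarrow> r = 0)}"

definition Den0 :: "'a::ring_1 set \<Rightarrow> 'a set set" where
  "Den0 A = {S. left_denom A S \<and> right_denom A S \<and> S \<subseteq> regular_in A}"

definition S0 :: "'a::ring_1 set \<Rightarrow> 'a set" where
  "S0 A = (GREATEST S. S \<in> Den0 A)"

definition units :: "'a::ring_1 set" where
  "units = {x. \<exists>y. x * y = 1 \<and> y * x = 1}"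

definition uinv :: "'a::ring_1 \<Rightarrow> 'a" where
  "uinv x = (THE y. x * y = 1 \<and> y * x = 1)"

text \<open>The ambient ring UNIV is the (two-sided) ring of quotients S^{-1}A = A S^{-1}
  of the subring A with respect to S = S0 A: A is a subring, elements of S0 A are
  units, and every element is of the form s^{-1} r and also of the form r s^{-1}.\<close>
definition is_Q :: "'a::ring_1 set \<Rightarrow> bool" where
  "is_Q A \<longleftrightarrow> subring A \<and> S0 A \<subseteq> units \<and>
     (\<forall>q. \<exists>s\<in>S0 A. \<exists>r\<in>A. q = uinv s * r) \<and>
     (\<forall>q. \<exists>s\<in>S0 A. \<exists>r\<in>A. q = r * uinv s)"

inductive_set unit_gen :: "'a::ring_1 set \<Rightarrow> 'a set" for X where
  one: "1 \<in> unit_gen X"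
| gen: "x \<in> X \<Longrightarrow> x \<in> unit_gen X"
| inv: "x \<in> X \<Longrightarrow> uinv x \<in> unit_gen X"
| mult: "x \<in> unit_gen X \<Longrightarrow> y \<in> unit_gen X \<Longrightarrow> x * y \<in> unit_gen X"

end

theory Submission
  imports Defs
begin

text \<open>Every unit of Q(R) is in particular regular in Q(R), so the units form an element of
  Den(Q(R),0). Conversely, for any regular Ore set T of Q(R) containing S0(R), clearing
  denominators of the Ore witnesses in Q(R) shows that T \<inter> R is a regular Ore set of R,
  hence contained in S0(R) \<subseteq> Q(R)*. Applied to T = S0(Q(R)), an element q = s\<inverse> r of
  S0(Q(R)) has r = s q \<in> S0(Q(R)) \<inter> R \<subseteq> Q(R)*, so q is a unit. Everything else follows
  from units \<inter> R = S0(R): a unit u = s\<inverse> r has numerator r = s u, a unit in R.\<close>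

lemma uinv_unique:
  assumes "x * y = 1" "y * x = 1"
  shows "uinv x = y"
  unfolding uinv_def
proof (rule the_equality)
  fix z assume "x * z = 1 \<and> z * x = 1"
  then have "z = z * (x * y)" "(z * x) * y = y" using assms(1) by simp_all
  then show "z = y" by (simp add: mult.assoc)
qed (use assms in simp)

lemma
  assumes "x \<in> units"
  shows right_inverse_uinv: "x * uinv x = 1"
    and left_inverse_uinv: "uinv x * x = 1"
  using assms uinv_unique unfolding units_def by blast+

lemma one_in_units: "1 \<in> units"
  unfolding units_def by auto

lemma uinv_one: "uinv 1 = 1"
  by (rule uinv_unique) simp_all

lemma uinv_in_units: "x \<in> units \<Longrightarrow> uinv x \<in> units"
  using right_inverse_uinv left_inverse_uinv unfolding units_def by blast

lemma units_mult:
  assumes "x \<in> units" "y \<in> units"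
  shows "x * y \<in> units"
proof -
  have "(x * y) * (uinv y * uinv x) = x * (y * uinv y) * uinv x"
    and "(uinv y * uinv x) * (x * y) = uinv y * (uinv x * x) * y"
    by (simp_all add: mult.assoc)
  then have "(x * y) * (uinv y * uinv x) = 1" "(uinv y * uinv x) * (x * y) = 1"
    using assms by (simp_all add: right_inverse_uinv left_inverse_uinv)
  then show ?thesis unfolding units_def by blast
qed

lemma units_regular:
  assumes "x \<in> units"
  shows "x \<in> regular_in UNIV"
proof -
  have "r = uinv x * (x * r)" "r = (r * x) * uinv x" for r
    using assms by (simp_all add: mult.assoc[symmetric] left_inverse_uinv)
      (simp add: mult.assoc right_inverse_uinv)
  then have "x * r = 0 \<longrightarrow> r = 0" "r * x = 0 \<longrightarrow> r = 0" for r
    by (metis mult_zero_right, metis mult_zero_left)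
  then show ?thesis unfolding regular_in_def by blast
qed

lemma regular_mult:
  assumes A: "subring A" and x: "x \<in> regular_in A" and y: "y \<in> regular_in A"
  shows "x * y \<in> regular_in A"
proof -
  have closed: "a * b \<in> A" if "a \<in> A" "b \<in> A" for a b
    using A that unfolding subring_def by blast
  have xA: "x \<in> A" and yA: "y \<in> A" using x y unfolding regular_in_def by auto
  show ?thesis unfolding regular_in_def
  proof (intro CollectI conjI ballI impI)
    show "x * y \<in> A" using closed xA yA .
  next
    fix r assume r: "r \<in> A" and "x * y * r = 0"
    then have "x * (y * r) = 0" by (simp add: mult.assoc)
    then have "y * r = 0" using x closed[OF yA r] unfolding regular_in_def by blast
    then show "r = 0" using y r unfolding regular_in_def by blast
  next
    fix r assume r: "r \<in> A" and "r * (x * y) = 0"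
    then have "(r * x) * y = 0" by (simp add: mult.assoc)
    then have "r * x = 0" using y closed[OF r xA] unfolding regular_in_def by blast
    then show "r = 0" using x r unfolding regular_in_def by blast
  qed
qed

lemma one_regular: "subring A \<Longrightarrow> 1 \<in> regular_in A"
  unfolding regular_in_def subring_def by auto

lemma zero_not_regular: "subring A \<Longrightarrow> 0 \<notin> regular_in A"
  unfolding regular_in_def subring_def by force

text \<open>For a set of regular elements the denominator conditions hold trivially, since
  r s = 0 or s r = 0 already forces r = 0.\<close>

lemma Den0I:
  assumes "subring A" "S \<subseteq> regular_in A" "1 \<in> S"
    and "\<And>s t. s \<in> S \<Longrightarrow> t \<in> S \<Longrightarrow> s * t \<in> S"
    and "\<And>r s. r \<in> A \<Longrightarrow> s \<in> S \<Longrightarrow> \<exists>s'\<in>S. \<exists>r'\<in>A. s' * r = r' * s"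
    and "\<And>r s. r \<in> A \<Longrightarrow> s \<in> S \<Longrightarrow> \<exists>s'\<in>S. \<exists>r'\<in>A. r * s' = s * r'"
  shows "S \<in> Den0 A"
proof -
  have "S \<subseteq> A" "0 \<notin> S"
    using assms(2) zero_not_regular[OF assms(1)] unfolding regular_in_def by auto
  with assms have "mult_closed A S" "left_ore A S" "right_ore A S"
    unfolding mult_closed_def left_ore_def right_ore_def by auto
  moreover have "r = 0" if "r \<in> A" "s \<in> S" "r * s = 0 \<or> s * r = 0" for r s
    using assms(2) that unfolding regular_in_def by blast
  then have "\<forall>r\<in>A. \<forall>s\<in>S. r * s = 0 \<longrightarrow> (\<exists>t\<in>S. t * r = 0)"
    and "\<forall>r\<in>A. \<forall>s\<in>S. s * r = 0 \<longrightarrow> (\<exists>t\<in>S. r * t = 0)"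
    using assms(3) by fastforce+
  ultimately show ?thesis
    using assms(2) unfolding Den0_def left_denom_def right_denom_def by blast
qed

inductive_set submonoid_gen :: "'a::monoid_mult set \<Rightarrow> 'a set" for X where
  one: "1 \<in> submonoid_gen X"
| gen: "x \<in> X \<Longrightarrow> x \<in> submonoid_gen X"
| mult: "x \<in> submonoid_gen X \<Longrightarrow> y \<in> submonoid_gen X \<Longrightarrow> x * y \<in> submonoid_gen X"

lemma submonoid_gen_subset:
  assumes "1 \<in> M" "X \<subseteq> M" "\<And>x y. x \<in> M \<Longrightarrow> y \<in> M \<Longrightarrow> x * y \<in> M"
  shows "submonoid_gen X \<subseteq> M"
proof
  fix x assume "x \<in> submonoid_gen X"
  then show "x \<in> M" by induction (use assms in auto)
qed

lemma submonoid_gen_left_ore: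
  assumes gen_ore: "\<forall>x\<in>X. \<forall>r\<in>A. \<exists>s'\<in>submonoid_gen X. \<exists>r'\<in>A. s' * r = r' * x"
    and "s \<in> submonoid_gen X" "r \<in> A"
  shows "\<exists>s'\<in>submonoid_gen X. \<exists>r'\<in>A. s' * r = r' * s"
  using assms(2,3)
proof (induction arbitrary: r)
  case one
  then show ?case using submonoid_gen.one by force
next
  case (gen x)
  then show ?case using gen_ore by blast
next
  case (mult x y)
  obtain s2 r2 where s2: "s2 \<in> submonoid_gen X" "r2 \<in> A" "s2 * r = r2 * y"
    using mult.IH(2) mult.prems by blast
  obtain s1 r1 where s1: "s1 \<in> submonoid_gen X" "r1 \<in> A" "s1 * r2 = r1 * x"
    using mult.IH(1) s2(2) by blast
  have "(s1 * s2) * r = r1 * (x * y)"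
    by (metis s1(3) s2(3) mult.assoc)
  then show ?case using s1 s2 submonoid_gen.mult by blast
qed

lemma submonoid_gen_right_ore:
  assumes gen_ore: "\<forall>x\<in>X. \<forall>r\<in>A. \<exists>s'\<in>submonoid_gen X. \<exists>r'\<in>A. r * s' = x * r'"
    and "s \<in> submonoid_gen X" "r \<in> A"
  shows "\<exists>s'\<in>submonoid_gen X. \<exists>r'\<in>A. r * s' = s * r'"
  using assms(2,3)
proof (induction arbitrary: r)
  case one
  then show ?case using submonoid_gen.one by force
next
  case (gen x)
  then show ?case using gen_ore by blast
next
  case (mult x y)
  obtain s1 r1 where s1: "s1 \<in> submonoid_gen X" "r1 \<in> A" "r * s1 = x * r1"
    using mult.IH(1) mult.prems by blast
  obtain s2 r2 where s2: "s2 \<in> submonoid_gen X" "r2 \<in> A" "r1 * s2 = y * r2"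
    using mult.IH(2) s1(2) by blast
  have "r * (s1 * s2) = (x * y) * r2"
    by (metis s1(3) s2(3) mult.assoc)
  then show ?case using s1 s2 submonoid_gen.mult by blast
qed

text \<open>The submonoid generated by all members of Den(A,0) is again a member; this is why
  Den(A,0) has a largest element.\<close>

lemma submonoid_gen_Union_Den0:
  assumes "subring A"
  shows "submonoid_gen (\<Union> (Den0 A)) \<in> Den0 A"
proof (rule Den0I[OF assms])
  let ?M = "submonoid_gen (\<Union> (Den0 A))"
  have "\<Union> (Den0 A) \<subseteq> regular_in A" unfolding Den0_def by blast
  then show "?M \<subseteq> regular_in A"
    using submonoid_gen_subset one_regular[OF assms] regular_mult[OF assms] by blast
  show "1 \<in> ?M" "\<And>s t. s \<in> ?M \<Longrightarrow> t \<in> ?M \<Longrightarrow> s * t \<in> ?M"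
    by (auto intro: submonoid_gen.intros)
  have "\<forall>x\<in>\<Union> (Den0 A). \<forall>r\<in>A. \<exists>s'\<in>?M. \<exists>r'\<in>A. s' * r = r' * x"
    unfolding Den0_def left_denom_def left_ore_def by (blast intro: submonoid_gen.gen)
  then show "\<And>r s. r \<in> A \<Longrightarrow> s \<in> ?M \<Longrightarrow> \<exists>s'\<in>?M. \<exists>r'\<in>A. s' * r = r' * s"
    using submonoid_gen_left_ore by blast
  have "\<forall>x\<in>\<Union> (Den0 A). \<forall>r\<in>A. \<exists>s'\<in>?M. \<exists>r'\<in>A. r * s' = x * r'"
    unfolding Den0_def right_denom_def right_ore_def by (blast intro: submonoid_gen.gen)
  then show "\<And>r s. r \<in> A \<Longrightarrow> s \<in> ?M \<Longrightarrow> \<exists>s'\<in>?M. \<exists>r'\<in>A. r * s' = s * r'"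
    using submonoid_gen_right_ore by blast
qed

lemma
  assumes "subring A"
  shows S0_in_Den0: "S0 A \<in> Den0 A"
    and Den0_subset_S0: "S \<in> Den0 A \<Longrightarrow> S \<subseteq> S0 A"
proof -
  have "S0 A = submonoid_gen (\<Union> (Den0 A))"
    unfolding S0_def using submonoid_gen_Union_Den0[OF assms]
    by (intro Greatest_equality) (auto intro: submonoid_gen.gen)
  then show "S0 A \<in> Den0 A" "S \<in> Den0 A \<Longrightarrow> S \<subseteq> S0 A"
    using submonoid_gen_Union_Den0[OF assms] by (auto intro: submonoid_gen.gen)
qed

lemma subring_UNIV: "subring UNIV"
  unfolding subring_def by simp

lemma units_in_Den0_UNIV: "units \<in> Den0 UNIV"
proof (rule Den0I[OF subring_UNIV])
  show "units \<subseteq> regular_in UNIV" using units_regular by blast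
  show "1 \<in> units" by (rule one_in_units)
  show "\<And>s t. s \<in> units \<Longrightarrow> t \<in> units \<Longrightarrow> s * t \<in> units" by (rule units_mult)
  fix r s :: 'a assume "s \<in> units"
  then have "1 * r = (r * uinv s) * s" "r * 1 = s * (uinv s * r)"
    by (simp_all add: mult.assoc left_inverse_uinv)
      (simp add: mult.assoc[symmetric] right_inverse_uinv)
  then show "\<exists>s'\<in>units. \<exists>r'\<in>UNIV. s' * r = r' * s" "\<exists>s'\<in>units. \<exists>r'\<in>UNIV. r * s' = s * r'"
    using one_in_units by blast+
qed

lemma units_subset_S0_UNIV: "units \<subseteq> S0 UNIV"
  by (rule Den0_subset_S0[OF subring_UNIV units_in_Den0_UNIV])

lemma S0_subset:
  assumes "subring A"
  shows "S0 A \<subseteq> A"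
  using S0_in_Den0[OF assms] unfolding Den0_def regular_in_def by blast

lemma is_Q_left_clear:
  assumes "is_Q R"
  obtains s where "s \<in> S0 R" "s * q \<in> R"
proof -
  obtain s r where "s \<in> S0 R" "r \<in> R" "q = uinv s * r"
    using assms unfolding is_Q_def by blast
  moreover from this have "s * q = r"
    using assms right_inverse_uinv unfolding is_Q_def by (force simp: mult.assoc[symmetric])
  ultimately show thesis using that by simp
qed

lemma is_Q_right_clear:
  assumes "is_Q R"
  obtains s where "s \<in> S0 R" "q * s \<in> R"
proof -
  obtain s r where "s \<in> S0 R" "r \<in> R" "q = r * uinv s"
    using assms unfolding is_Q_def by blast
  moreover from this have "q * s = r"
    using assms left_inverse_uinv unfolding is_Q_def by (force simp: mult.assoc)
  ultimately show thesis using that by simp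
qed

lemma Den0_UNIV_Int_subring:
  assumes Q: "is_Q R" and T: "T \<in> Den0 UNIV" and S0_T: "S0 R \<subseteq> T"
  shows "T \<inter> R \<in> Den0 R"
proof -
  have R: "subring R" using Q unfolding is_Q_def by blast
  have R_mult: "a * b \<in> R" if "a \<in> R" "b \<in> R" for a b
    using R that unfolding subring_def by blast
  have T_mult: "a * b \<in> T" if "a \<in> T" "b \<in> T" for a b
    using T that unfolding Den0_def left_denom_def left_ore_def mult_closed_def by blast
  have T_left: "\<exists>u\<in>T. \<exists>q. u * a = q * t" if "t \<in> T" for a t
    using T that unfolding Den0_def left_denom_def left_ore_def by blast
  have T_right: "\<exists>u\<in>T. \<exists>q. a * u = t * q" if "t \<in> T" for a t
    using T that unfolding Den0_def right_denom_def right_ore_def by blast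
  show ?thesis
  proof (rule Den0I[OF R])
    show "T \<inter> R \<subseteq> regular_in R"
      using T unfolding Den0_def regular_in_def by blast
    show "1 \<in> T \<inter> R"
      using T R unfolding Den0_def left_denom_def left_ore_def mult_closed_def subring_def by blast
    show "s * t \<in> T \<inter> R" if "s \<in> T \<inter> R" "t \<in> T \<inter> R" for s t
      using that T_mult R_mult by blast
  next
    fix a t assume "a \<in> R" and t: "t \<in> T \<inter> R"
    obtain u q where u: "u \<in> T" "u * a = q * t" using T_left t by blast
    obtain s1 where s1: "s1 \<in> S0 R" "s1 * q \<in> R" using is_Q_left_clear[OF Q] .
    obtain s2 where s2: "s2 \<in> S0 R" "s2 * (s1 * u) \<in> R" using is_Q_left_clear[OF Q] .
    have "s2 * (s1 * u) \<in> T" using S0_T s1(1) s2(1) u(1) T_mult by blast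
    moreover have "(s2 * (s1 * u)) * a = (s2 * (s1 * q)) * t"
      using u(2) by (simp add: mult.assoc)
    moreover have "s2 * (s1 * q) \<in> R" using R_mult S0_subset[OF R] s1 s2 by blast
    ultimately show "\<exists>s'\<in>T \<inter> R. \<exists>r'\<in>R. s' * a = r' * t" using s2(2) by blast
  next
    fix a t assume "a \<in> R" and t: "t \<in> T \<inter> R"
    obtain u q where u: "u \<in> T" "a * u = t * q" using T_right t by blast
    obtain s1 where s1: "s1 \<in> S0 R" "q * s1 \<in> R" using is_Q_right_clear[OF Q] .
    obtain s2 where s2: "s2 \<in> S0 R" "(u * s1) * s2 \<in> R" using is_Q_right_clear[OF Q] .
    have "(u * s1) * s2 \<in> T" using S0_T s1(1) s2(1) u(1) T_mult by blast
    moreover have "a * ((u * s1) * s2) = t * ((q * s1) * s2)"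
      using u(2) by (simp add: mult.assoc[symmetric])
    moreover have "(q * s1) * s2 \<in> R" using R_mult S0_subset[OF R] s1 s2 by blast
    ultimately show "\<exists>s'\<in>T \<inter> R. \<exists>r'\<in>R. a * s' = t * r'" using s2(2) by blast
  qed
qed

lemma S0_UNIV_Int_in_Den0:
  assumes Q: "is_Q R"
  shows "S0 UNIV \<inter> R \<in> Den0 R"
proof (rule Den0_UNIV_Int_subring[OF Q S0_in_Den0[OF subring_UNIV]])
  show "S0 R \<subseteq> S0 UNIV" using Q units_subset_S0_UNIV unfolding is_Q_def by blast
qed

lemma S0_UNIV_eq_units:
  fixes R :: "'a::ring_1 set"
  assumes Q: "is_Q R"
  shows "S0 (UNIV :: 'a set) = units"
proof
  have R: "subring R" and S0_R_units: "S0 R \<subseteq> units" using Q unfolding is_Q_def by blast+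
  show "S0 UNIV \<subseteq> (units :: 'a set)"
  proof
    fix q assume q: "q \<in> S0 (UNIV :: 'a set)"
    obtain s where s: "s \<in> S0 R" "s * q \<in> R" using is_Q_left_clear[OF Q] .
    have s_unit: "s \<in> units" using s(1) S0_R_units by blast
    have "s * q \<in> S0 UNIV"
      using S0_in_Den0[OF subring_UNIV] s_unit q units_subset_S0_UNIV
      unfolding Den0_def left_denom_def left_ore_def mult_closed_def by blast
    then have "s * q \<in> units"
      using Den0_subset_S0[OF R S0_UNIV_Int_in_Den0[OF Q]] s(2) S0_R_units by blast
    then have "uinv s * (s * q) \<in> units"
      using s_unit uinv_in_units units_mult by blast
    then show "q \<in> units"
      using s_unit by (simp add: mult.assoc[symmetric] left_inverse_uinv)
  qed
qed (rule units_subset_S0_UNIV)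

lemma units_Int_eq_S0:
  assumes Q: "is_Q R"
  shows "units \<inter> R = S0 R"
proof
  have R: "subring R" and S0_R_units: "S0 R \<subseteq> units" using Q unfolding is_Q_def by blast+
  then show "S0 R \<subseteq> units \<inter> R" using S0_subset by blast
  show "units \<inter> R \<subseteq> S0 R"
    using Den0_subset_S0[OF R S0_UNIV_Int_in_Den0[OF Q]] by (simp add: S0_UNIV_eq_units[OF Q])
qed

lemma units_eq_left_fractions:
  assumes Q: "is_Q R"
  shows "units = {uinv s * t | s t. s \<in> S0 R \<and> t \<in> S0 R}"
proof
  have S0_R_units: "S0 R \<subseteq> units" using Q unfolding is_Q_def by blast
  then show "{uinv s * t | s t. s \<in> S0 R \<and> t \<in> S0 R} \<subseteq> units"
    using units_mult uinv_in_units by blast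
  show "units \<subseteq> {uinv s * t | s t. s \<in> S0 R \<and> t \<in> S0 R}"
  proof
    fix u :: 'a assume u: "u \<in> units"
    obtain s where s: "s \<in> S0 R" "s * u \<in> R" using is_Q_left_clear[OF Q] .
    have s_unit: "s \<in> units" using s(1) S0_R_units by blast
    then have "s * u \<in> S0 R"
      using units_Int_eq_S0[OF Q] units_mult s(2) u by blast
    moreover have "u = uinv s * (s * u)"
      using s_unit by (simp add: mult.assoc[symmetric] left_inverse_uinv)
    ultimately show "u \<in> {uinv s * t | s t. s \<in> S0 R \<and> t \<in> S0 R}" using s(1) by blast
  qed
qed

lemma units_eq_right_fractions:
  assumes Q: "is_Q R"
  shows "units = {t * uinv s | s t. s \<in> S0 R \<and> t \<in> S0 R}"
proof
  have S0_R_units: "S0 R \<subseteq> units" using Q unfolding is_Q_def by blast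
  then show "{t * uinv s | s t. s \<in> S0 R \<and> t \<in> S0 R} \<subseteq> units"
    using units_mult uinv_in_units by blast
  show "units \<subseteq> {t * uinv s | s t. s \<in> S0 R \<and> t \<in> S0 R}"
  proof
    fix u :: 'a assume u: "u \<in> units"
    obtain s where s: "s \<in> S0 R" "u * s \<in> R" using is_Q_right_clear[OF Q] .
    have s_unit: "s \<in> units" using s(1) S0_R_units by blast
    then have "u * s \<in> S0 R"
      using units_Int_eq_S0[OF Q] units_mult s(2) u by blast
    moreover have "u = (u * s) * uinv s"
      using s_unit by (simp add: mult.assoc right_inverse_uinv)
    ultimately show "u \<in> {t * uinv s | s t. s \<in> S0 R \<and> t \<in> S0 R}" using s(1) by blast
  qed
qed

lemma unit_gen_subset_units:
  assumes "X \<subseteq> units"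
  shows "unit_gen X \<subseteq> units"
proof
  fix x assume "x \<in> unit_gen X"
  then show "x \<in> units" using assms
    by (induction rule: unit_gen.induct) (auto intro: one_in_units uinv_in_units units_mult)
qed

lemma units_eq_unit_gen:
  assumes Q: "is_Q R"
  shows "units = unit_gen (S0 R \<union> uinv ` S0 R)"
proof
  show "units \<subseteq> unit_gen (S0 R \<union> uinv ` S0 R)"
  proof
    fix u :: 'a assume "u \<in> units"
    then obtain s t where "u = uinv s * t" "s \<in> S0 R" "t \<in> S0 R"
      using units_eq_left_fractions[OF Q] by blast
    then show "u \<in> unit_gen (S0 R \<union> uinv ` S0 R)"
      by (metis UnI1 UnI2 image_eqI unit_gen.gen unit_gen.mult)
  qed
  show "unit_gen (S0 R \<union> uinv ` S0 R) \<subseteq> units"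
    using Q uinv_in_units by (intro unit_gen_subset_units) (auto simp: is_Q_def)
qed

lemma is_Q_UNIV:
  fixes R :: "'a::ring_1 set"
  assumes "is_Q R"
  shows "is_Q (UNIV :: 'a set)"
  unfolding is_Q_def S0_UNIV_eq_units[OF assms]
  using subring_UNIV one_in_units uinv_one by (metis UNIV_I mult_1_left mult_1_right order_refl)

theorem theorem4p4:
  fixes R :: "'a::ring_1 set"
  assumes "is_Q R"
  shows "(S0 (UNIV :: 'a set) = units \<and> S0 (UNIV :: 'a set) \<inter> R = S0 R)
    \<and> units = unit_gen (S0 R \<union> uinv ` S0 R)
    \<and> units = {uinv s * t | s t. s \<in> S0 R \<and> t \<in> S0 R}
    \<and> units = {t * uinv s | s t. s \<in> S0 R \<and> t \<in> S0 R}
    \<and> is_Q (UNIV :: 'a set)"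
  using S0_UNIV_eq_units[OF assms] units_Int_eq_S0[OF assms] units_eq_unit_gen[OF assms]
    units_eq_left_fractions[OF assms] units_eq_right_fractions[OF assms] is_Q_UNIV[OF assms]
  by simp

end
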